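(* Let $k\ge1$ be an integer and $0<\alpha<1$, and suppose there is a positive integer satisfying $\sum_{i=k}^{\infty}2^{-i-v}\binom{i+v-1}{i}\le\alpha$; let $v$ be the largest such integer. Under the hypotheses of the setting in the context, the knockoffs procedure with parameter $v$ controls the $k$-familywise error rate at level $\alpha$: $\Pr(V\ge k)\le\alpha$.
   Context: Setting: $p\ge1$; $W_1,\dots,W_p$ are real random variables, almost surely pairwise distinct; $\chi_1,\dots,\chi_p$ take values in $\{-1,0,1\}$; $\mathcal H_0\subseteq\{1,\dots,p\}$ is the set of true nulls, and conditional on $(W_1,\dots,W_p)$ and $(\chi_j)_{j\notin\mathcal H_0}$, the variables $(\chi_j)_{j\in\mathcal H_0}$ are jointly independent and uniform on $\{-1,+1\}$. Knockoffs procedure with parameter $v$: let $\rho$ be the permutation with $W_{\rho(1)}>\cdots>W_{\rho(p)}$; let $j^\star$ be the position of the $v$-th $-1$ in $\chi_{\rho(1)},\dots,\chi_{\rho(p)}$ ($j^\star=p$ if fewer than $v$ entries equal $-1$); reject $\rho(j)$ for all $j\le j^\star$ with $\chi_{\rho(j)}=+1$. $V=\#\{j\in\mathcal H_0: j\text{ rejected}\}$. (This setting arises in linear regression $y=X\beta+z$, $n\ge p$, full-rank $X$, Gaussian noise, with Lasso-based knockoff statistics $W_j=\max\{Z_j,\tilde Z_j\}$, $\chi_j=\mathrm{sgn}(Z_j-\tilde Z_j)$ and $\mathcal H_0=\{j:\beta_j=0\}$.) *)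

theory Defs
  imports "HOL-Probability.Probability"
begin

text \<open>Deterministic description of the knockoffs procedure. Variables are indexed by
  1..p; w gives the statistics W_j, x gives the signs chi_j.\<close>

text \<open>The ordering rho(1),...,rho(p) with decreasing W (as a 0-based list).\<close>
definition knockoff_order :: "nat \<Rightarrow> (nat \<Rightarrow> real) \<Rightarrow> nat list" where
  "knockoff_order p w = sort_key (\<lambda>j. - w j) [1..<Suc p]"

text \<open>j-star: the (1-based) position of the v-th -1 in chi_rho(1),...,chi_rho(p), or p
  if there are fewer than v entries equal to -1.\<close>
definition knockoff_jstar :: "nat \<Rightarrow> (nat \<Rightarrow> real) \<Rightarrow> (nat \<Rightarrow> int) \<Rightarrow> nat \<Rightarrow> nat" where
  "knockoff_jstar p w x v =
     (let rs = knockoff_order p w;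
          negs = filter (\<lambda>i. x (rs ! i) = -1) [0..<p]
      in if length negs < v then p else negs ! (v - 1) + 1)"

definition knockoff_rejections ::
  "nat \<Rightarrow> (nat \<Rightarrow> real) \<Rightarrow> (nat \<Rightarrow> int) \<Rightarrow> nat \<Rightarrow> nat set" where
  "knockoff_rejections p w x v =
     {knockoff_order p w ! i | i. i < knockoff_jstar p w x v \<and> x (knockoff_order p w ! i) = 1}"

text \<open>The series sum_{i \<ge> k} 2^{-i-v} binom(i+v-1, i), reindexed i = n + k.\<close>
definition knockoff_tail :: "nat \<Rightarrow> nat \<Rightarrow> real" where
  "knockoff_tail k v = (\<Sum>n. (1/2) ^ (n + k + v) * real ((n + k + v - 1) choose (n + k)))"

end

theory Submission
  imports Defs
begin

text \<open>Condition on the comparison pattern of the statistics W and on the signs of the non-nulls.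
  On each such cell the ordering is fixed, and the null signs are independent fair coins. If at
  least k nulls are rejected, then at least k of the first k+v-1 nulls in the ordering have sign +1:
  either the last rejected null is among them, or all of them precede it, and fewer than v
  knockoffs win before a rejected position. So on every cell the conditional probability of
  V \<ge> k is at most that of a Binomial(k+v-1, 1/2) variable being at least k, which is exactly the
  negative binomial tail sum of the statement.\<close>

section \<open>Binomial and negative binomial tails\<close>

lemma negative_binomial_sums:
  "(\<lambda>i. (1/2::real) ^ (i + Suc u) * real ((i + u) choose i)) sums 1"
proof -
  have "(\<lambda>n. ((- real (Suc u)) gchoose n) * (-1/2::real)^n) sums (1 + (-1/2)) powr (- real (Suc u))"
    by (rule gen_binomial_real) simp
  moreover have "((- real (Suc u)) gchoose n) * (-1/2::real)^n = real ((n + u) choose n) * (1/2)^n" for n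
  proof -
    have "((- real (Suc u)) gchoose n) = (-1)^n * ((real n + real (Suc u) - 1) gchoose n)"
      by (subst gbinomial_negated_upper) simp
    also have "real n + real (Suc u) - 1 = real (n + u)" by simp
    finally show ?thesis by (simp add: binomial_gbinomial power_mult_distrib[symmetric])
  qed
  moreover have "(1 + (-1/2::real)) powr (- real (Suc u)) = 2 ^ Suc u"
  proof -
    have "(1 + (-1/2::real)) powr (- real (Suc u)) = inverse ((1/2) powr real (Suc u))"
      using powr_minus[of "1/2::real" "real (Suc u)"]
      by (simp only: add_diff_cancel_left' one_add_one[symmetric]) simp
    also have "(1/2::real) powr real (Suc u) = (1/2) ^ Suc u" by (rule powr_realpow) simp
    finally show ?thesis by (simp add: power_one_over)
  qed
  ultimately have "(\<lambda>n. real ((n + u) choose n) * (1/2)^n) sums (2 ^ Suc u)" by simp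
  from sums_mult[OF this, of "(1/2)^Suc u"]
  show ?thesis by (simp add: power_add mult_ac power_one_over)
qed

lemma sum_choose_lessThan_Suc:
  "(\<Sum>i<Suc k. Suc n choose i) = 2 * (\<Sum>i<k. n choose i) + (n choose k)"
  by (induction k) simp_all

lemma sum_negative_binomial_lessThan:
  "(\<Sum>i<k. real ((i + u) choose i) / 2 ^ (i + u + 1)) = (\<Sum>i<k. real ((k + u) choose i)) / 2 ^ (k + u)"
proof (induction k)
  case (Suc k)
  have "(\<Sum>i<Suc k. real ((Suc k + u) choose i)) = 2 * (\<Sum>i<k. real ((k + u) choose i)) + real ((k + u) choose k)"
    using sum_choose_lessThan_Suc[where k=k and n="k + u"] by (simp del: sum.lessThan_Suc flip: of_nat_sum)
  then show ?case using Suc by (simp add: field_simps)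
qed simp

text \<open>The tail series is the probability that a Binomial(k+u, 1/2) variable is at least k.\<close>
lemma knockoff_tail_Suc:
  "knockoff_tail k (Suc u) = 1 - (\<Sum>i<k. real ((k + u) choose i)) / 2 ^ (k + u)"
proof -
  let ?g = "\<lambda>i. (1/2::real) ^ (i + Suc u) * real ((i + u) choose i)"
  have "(\<lambda>n. ?g (n + k)) sums (1 - (\<Sum>i<k. ?g i))"
    using sums_iff_shift[of ?g k "1 - (\<Sum>i<k. ?g i)"] negative_binomial_sums by simp
  hence "knockoff_tail k (Suc u) = 1 - (\<Sum>i<k. ?g i)"
    unfolding knockoff_tail_def by (simp add: sums_iff add.assoc)
  also have "(\<Sum>i<k. ?g i) = (\<Sum>i<k. real ((i + u) choose i) / 2 ^ (i + u + 1))"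
    by (simp add: power_one_over)
  also have "\<dots> = (\<Sum>i<k. real ((k + u) choose i)) / 2 ^ (k + u)"
    by (rule sum_negative_binomial_lessThan)
  finally show ?thesis .
qed

lemma binomial_lower_tail_antimono:
  assumes "q \<le> n"
  shows "(\<Sum>i<k. real (n choose i)) / 2 ^ n \<le> (\<Sum>i<k. real (q choose i)) / 2 ^ q"
  using assms
proof (induction n rule: dec_induct)
  case (step n)
  have "(\<Sum>i<k. real (Suc n choose i)) \<le> 2 * (\<Sum>i<k. real (n choose i))"
  proof (cases k)
    case (Suc k')
    have "(\<Sum>i<k. real (Suc n choose i)) = 2 * (\<Sum>i<k'. real (n choose i)) + real (n choose k')"
      using sum_choose_lessThan_Suc[where k=k' and n=n] Suc by (simp del: sum.lessThan_Suc flip: of_nat_sum)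
    then show ?thesis using Suc by simp
  qed simp
  then have "(\<Sum>i<k. real (Suc n choose i)) / 2 ^ Suc n \<le> (\<Sum>i<k. real (n choose i)) / 2 ^ n"
    by (simp add: field_simps)
  with step.IH show ?case by linarith
qed simp

lemma card_subsets_card_ge:
  assumes "finite Q"
  shows "card {T. T \<subseteq> Q \<and> k \<le> card T} + (\<Sum>i<k. card Q choose i) = 2 ^ card Q"
proof -
  have "{T. T \<subseteq> Q \<and> card T < k} = (\<Union>i<k. {T. T \<subseteq> Q \<and> card T = i})" by auto
  hence small: "card {T. T \<subseteq> Q \<and> card T < k} = (\<Sum>i<k. card Q choose i)"
    using assms by (simp, subst card_UN_disjoint) (auto simp: n_subsets)
  have "Pow Q = {T. T \<subseteq> Q \<and> k \<le> card T} \<union> {T. T \<subseteq> Q \<and> card T < k}" by auto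
  hence "card (Pow Q) = card {T. T \<subseteq> Q \<and> k \<le> card T} + card {T. T \<subseteq> Q \<and> card T < k}"
    using assms by (simp add: card_Un_disjoint disjoint_iff)
  with small assms show ?thesis by (simp add: card_Pow)
qed

text \<open>A sign vector on H is determined by its positive set inside Q and its positive set outside Q.\<close>
lemma card_signs_many_positive:
  assumes "finite H" "Q \<subseteq> H"
  shows "card {s \<in> H \<rightarrow>\<^sub>E {-1, 1::int}. k \<le> card {j\<in>Q. s j = 1}}
       = card {T. T \<subseteq> Q \<and> k \<le> card T} * 2 ^ (card H - card Q)"
proof -
  let ?A = "{s \<in> H \<rightarrow>\<^sub>E {-1, 1::int}. k \<le> card {j\<in>Q. s j = 1}}"
  let ?B = "{T. T \<subseteq> Q \<and> k \<le> card T} \<times> Pow (H - Q)"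
  let ?f = "\<lambda>s. ({j\<in>Q. s j = (1::int)}, {j\<in>H-Q. s j = 1})"
  let ?g = "\<lambda>(T, U). (\<lambda>j\<in>H. if j \<in> T \<union> U then 1 else (-1::int))"
  have "bij_betw ?f ?A ?B"
  proof (rule bij_betw_byWitness[where f'="?g"])
    show "\<forall>s\<in>?A. ?g (?f s) = s"
    proof
      fix s assume s: "s \<in> ?A"
      show "?g (?f s) = s"
      proof
        fix j show "?g (?f s) j = s j"
          using s assms(2) by (cases "j \<in> H") (force simp: PiE_def extensional_def Pi_def)+
      qed
    qed
    show "?g ` ?B \<subseteq> ?A"
    proof
      fix s assume "s \<in> ?g ` ?B"
      then obtain T U where TU: "T \<subseteq> Q" "k \<le> card T" "U \<subseteq> H - Q" and s: "s = ?g (T, U)"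
        by auto
      have "{j\<in>Q. s j = 1} = T" using TU assms(2) s by auto
      then show "s \<in> ?A" using TU s by auto
    qed
  qed (use assms(2) in auto)
  hence "card ?A = card ?B" by (rule bij_betw_same_card)
  then show ?thesis
    using assms by (simp add: card_cartesian_product card_Pow card_Diff_subset finite_subset)
qed

lemma card_signs_many_positive_le_tail:
  assumes "finite H" "Q \<subseteq> H" "card Q \<le> k + u"
  shows "real (card {s \<in> H \<rightarrow>\<^sub>E {-1, 1::int}. k \<le> card {j\<in>Q. s j = 1}})
          \<le> knockoff_tail k (Suc u) * 2 ^ card H"
proof -
  have fin: "finite Q" using assms finite_subset by blast
  have QH: "card Q \<le> card H" using assms card_mono by blast
  have "real (card {T. T \<subseteq> Q \<and> k \<le> card T}) + (\<Sum>i<k. real (card Q choose i)) = 2 ^ card Q"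
    using arg_cong[OF card_subsets_card_ge[OF fin, of k], of real] by simp
  then have "real (card {s \<in> H \<rightarrow>\<^sub>E {-1, 1::int}. k \<le> card {j\<in>Q. s j = 1}})
      = (2 ^ card Q - (\<Sum>i<k. real (card Q choose i))) * 2 ^ (card H - card Q)"
    using card_signs_many_positive[OF assms(1,2), of k] by simp
  also have "\<dots> = (1 - (\<Sum>i<k. real (card Q choose i)) / 2 ^ card Q) * 2 ^ card H"
    using QH by (simp add: field_simps flip: power_add)
  also have "\<dots> \<le> (1 - (\<Sum>i<k. real ((k + u) choose i)) / 2 ^ (k + u)) * 2 ^ card H"
    using binomial_lower_tail_antimono[OF assms(3), of k] by simp
  finally show ?thesis by (simp add: knockoff_tail_Suc)
qed

section \<open>The knockoff scan\<close>

lemma sorted_wrt_take_below: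
  fixes xs :: "'a::linorder list"
  assumes "sorted_wrt (<) xs" "z \<in> set xs - set (take n xs)"
  shows "n < length xs" "\<forall>y\<in>set (take n xs). y < z"
proof -
  have "z \<in> set (drop n xs)"
    using assms(2) by (metis Diff_iff Un_iff append_take_drop_id set_append)
  then show "n < length xs" by (auto simp: in_set_conv_nth)
  from \<open>z \<in> set (drop n xs)\<close> show "\<forall>y\<in>set (take n xs). y < z"
    using assms(1) sorted_wrt_append[of "(<)" "take n xs" "drop n xs"] by simp
qed

lemma sorted_wrt_less_nth_subset_take:
  fixes xs :: "'a::linorder list"
  assumes "sorted_wrt (<) xs" "n < length xs"
  shows "{y \<in> set xs. y < xs ! n} \<subseteq> set (take n xs)"
proof
  fix y assume y: "y \<in> {y \<in> set xs. y < xs ! n}"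
  show "y \<in> set (take n xs)"
  proof (rule ccontr)
    assume "y \<notin> set (take n xs)"
    hence "y \<in> set (drop n xs)" using y by (metis Un_iff append_take_drop_id mem_Collect_eq set_append)
    hence "y = xs ! n \<or> y \<in> set (drop (Suc n) xs)" using assms(2) by (simp flip: Cons_nth_drop_Suc)
    moreover have "sorted_wrt (<) (xs ! n # drop (Suc n) xs)"
      using assms sorted_wrt_drop[of "(<)" xs n] by (simp flip: Cons_nth_drop_Suc)
    ultimately show False using y by auto
  qed
qed

lemma sort_key_cong_le:
  "(\<forall>a\<in>set xs. \<forall>b\<in>set xs. (f a \<le> f b) = (g a \<le> g b)) \<Longrightarrow> sort_key f xs = sort_key g xs"
proof (induction xs)
  case (Cons x xs)
  have "insort_key f x ys = insort_key g x ys"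
    if "\<forall>a\<in>insert x (set ys). \<forall>b\<in>insert x (set ys). (f a \<le> f b) = (g a \<le> g b)" for ys
    using that by (induction ys) auto
  then show ?case using Cons by simp
qed simp

lemma length_knockoff_order [simp]: "length (knockoff_order p w) = p"
  and distinct_knockoff_order [simp]: "distinct (knockoff_order p w)"
  and set_knockoff_order [simp]: "set (knockoff_order p w) = {1..p}"
  by (auto simp: knockoff_order_def distinct_sort)

lemma knockoff_order_nth_mem: "i < p \<Longrightarrow> knockoff_order p w ! i \<in> {1..p}"
  using nth_mem[of i "knockoff_order p w"] by simp

definition le_pattern :: "'i set \<Rightarrow> ('i \<Rightarrow> 'b::linorder) \<Rightarrow> ('i \<times> 'i) set" where
  "le_pattern I w = {(i, j) \<in> I \<times> I. w j \<le> w i}"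

lemma knockoff_order_cong_le_pattern:
  "le_pattern {1..p} w = le_pattern {1..p} w' \<Longrightarrow> knockoff_order p w = knockoff_order p w'"
  unfolding knockoff_order_def
proof (rule sort_key_cong_le, intro ballI)
  fix a b assume "le_pattern {1..p} w = le_pattern {1..p} w'" "a \<in> set [1..<Suc p]" "b \<in> set [1..<Suc p]"
  then have "((a, b) \<in> le_pattern {1..p} w) = ((a, b) \<in> le_pattern {1..p} w')" by simp
  then show "(- w a \<le> - w b) = (- w' a \<le> - w' b)"
    using \<open>a \<in> _\<close> \<open>b \<in> _\<close> by (auto simp: le_pattern_def)
qed

lemma knockoff_jstar_le:
  assumes "v \<ge> 1"
  shows "knockoff_jstar p w x v \<le> p"
proof -
  let ?negs = "filter (\<lambda>i. x (knockoff_order p w ! i) = -1) [0..<p]"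
  have "?negs ! (v - 1) < p" if "\<not> length ?negs < v"
    using nth_mem[of "v - 1" ?negs] that assms by simp
  then show ?thesis by (simp add: knockoff_jstar_def Let_def Suc_le_eq)
qed

text \<open>The v-th negative sign ends the scan.\<close>
lemma card_negatives_before_rejection:
  assumes "v \<ge> 1" "i < knockoff_jstar p w x v" "x (knockoff_order p w ! i) \<noteq> -1"
  shows "card {i'. i' < i \<and> x (knockoff_order p w ! i') = -1} < v"
proof -
  define rs where "rs = knockoff_order p w"
  define negs where "negs = filter (\<lambda>i. x (rs ! i) = -1) [0..<p]"
  have jstar: "knockoff_jstar p w x v = (if length negs < v then p else negs ! (v - 1) + 1)"
    by (simp add: knockoff_jstar_def rs_def negs_def Let_def)
  have "i < p" using assms(2) knockoff_jstar_le[OF assms(1)] by (rule less_le_trans)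
  show ?thesis
  proof (cases "length negs < v")
    case True
    have "{i'. i' < i \<and> x (rs ! i') = -1} \<subseteq> set negs" using \<open>i < p\<close> by (auto simp: negs_def)
    hence "card {i'. i' < i \<and> x (rs ! i') = -1} \<le> card (set negs)"
      by (intro card_mono) auto
    also have "\<dots> \<le> length negs" by (rule card_length)
    finally show ?thesis using True by (simp add: rs_def)
  next
    case False
    define z where "z = negs ! (v - 1)"
    have "z \<in> set negs" using False assms(1) by (simp add: z_def)
    hence "x (rs ! z) = -1" by (simp add: negs_def)
    hence "i \<noteq> z" using assms(3) by (auto simp: rs_def)
    moreover have "i \<le> z" using assms(2) False jstar by (simp add: z_def)
    ultimately have "i < z" by simp
    hence "{i'. i' < i \<and> x (rs ! i') = -1} \<subseteq> {y \<in> set negs. y < z}"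
      using \<open>z \<in> set negs\<close> by (auto simp: negs_def)
    also have "\<dots> \<subseteq> set (take (v - 1) negs)"
      unfolding z_def using False assms(1)
      by (intro sorted_wrt_less_nth_subset_take) (auto simp: negs_def intro: sorted_wrt_filter)
    finally have "card {i'. i' < i \<and> x (rs ! i') = -1} \<le> card (set (take (v - 1) negs))"
      by (intro card_mono) auto
    also have "\<dots> \<le> v - 1" using card_length[of "take (v - 1) negs"] by simp
    finally show ?thesis using assms(1) by (simp add: rs_def)
  qed
qed

lemma knockoff_rejections_cong:
  assumes "knockoff_order p w = knockoff_order p w'" "\<forall>j\<in>{1..p}. x j = x' j" "v \<ge> 1"
  shows "knockoff_rejections p w x v = knockoff_rejections p w' x' v"
proof -
  have "filter (\<lambda>i. x (knockoff_order p w ! i) = -1) [0..<p]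
      = filter (\<lambda>i. x' (knockoff_order p w ! i) = -1) [0..<p]"
    using assms(2) knockoff_order_nth_mem by (intro filter_cong) auto
  hence "knockoff_jstar p w x v = knockoff_jstar p w' x' v"
    using assms(1) by (simp add: knockoff_jstar_def Let_def)
  then show ?thesis
    using assms knockoff_jstar_le[of v p w x] knockoff_order_nth_mem
    unfolding knockoff_rejections_def by (auto; metis order.strict_trans2)
qed

definition first_nulls :: "nat \<Rightarrow> (nat \<Rightarrow> real) \<Rightarrow> nat set \<Rightarrow> nat \<Rightarrow> nat set" where
  "first_nulls p w H N = (\<lambda>i. knockoff_order p w ! i) `
     set (take N (sorted_list_of_set {i. i < p \<and> knockoff_order p w ! i \<in> H}))"

lemma first_nulls_subset: "first_nulls p w H N \<subseteq> H"
  by (auto simp: first_nulls_def dest: in_set_takeD)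

lemma card_first_nulls_le: "card (first_nulls p w H N) \<le> N"
proof -
  let ?L = "sorted_list_of_set {i. i < p \<and> knockoff_order p w ! i \<in> H}"
  have "card (first_nulls p w H N) \<le> card (set (take N ?L))"
    unfolding first_nulls_def by (rule card_image_le) simp
  also have "\<dots> \<le> N" using card_length[of "take N ?L"] by simp
  finally show ?thesis .
qed

text \<open>If the last rejected null lies among the first k+v-1 nulls, all rejected nulls do; otherwise
  all k+v-1 first nulls precede it, and fewer than v of them are negative.\<close>
lemma many_null_rejections_imp_many_positive_first_nulls:
  assumes signs: "\<forall>j\<in>H. x j \<in> {-1, 1}" and "k \<ge> 1" "v \<ge> 1"
    and many: "k \<le> card (knockoff_rejections p w x v \<inter> H)"
  shows "k \<le> card {j \<in> first_nulls p w H (k + v - 1). x j = 1}"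
proof -
  define rs where "rs = knockoff_order p w"
  define N where "N = k + v - 1"
  define L where "L = sorted_list_of_set {i. i < p \<and> rs ! i \<in> H}"
  define F where "F = set (take N L)"
  define RP where "RP = {i. i < knockoff_jstar p w x v \<and> x (rs ! i) = 1 \<and> rs ! i \<in> H}"
  have sorted: "sorted_wrt (<) L" and set_L: "set L = {i. i < p \<and> rs ! i \<in> H}"
    by (simp_all add: L_def)
  have RP_L: "RP \<subseteq> set L"
    using knockoff_jstar_le[OF \<open>v \<ge> 1\<close>, of p w x] by (auto simp: RP_def set_L)
  have fin_RP: "finite RP" using RP_L finite_subset by blast
  have "knockoff_rejections p w x v \<inter> H = (\<lambda>i. rs ! i) ` RP"
    unfolding knockoff_rejections_def RP_def rs_def by auto
  hence "k \<le> card RP" using many card_image_le[OF fin_RP, of "\<lambda>i. rs ! i"] by simp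
  hence "RP \<noteq> {}" using \<open>k \<ge> 1\<close> by auto
  define i0 where "i0 = Max RP"
  have i0: "i0 \<in> RP" "\<And>i. i \<in> RP \<Longrightarrow> i \<le> i0"
    using fin_RP \<open>RP \<noteq> {}\<close> by (simp_all add: i0_def)
  have few_neg: "card {i. i < i0 \<and> x (rs ! i) = -1} < v"
    using card_negatives_before_rejection[OF \<open>v \<ge> 1\<close>, of i0 p w x] i0(1)
    by (simp add: RP_def rs_def)
  define Fpos where "Fpos = {i \<in> F. x (rs ! i) = 1}"
  have fin_F: "finite F" by (simp add: F_def)
  have "k \<le> card Fpos"
  proof (cases "RP \<subseteq> F")
    case True
    hence "RP \<subseteq> Fpos" by (auto simp: Fpos_def RP_def)
    then show ?thesis using \<open>k \<le> card RP\<close> card_mono[of Fpos RP] fin_F by (simp add: Fpos_def)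
  next
    case False
    then obtain i1 where "i1 \<in> RP" "i1 \<notin> F" by auto
    hence "i1 \<in> set L - set (take N L)" using RP_L by (auto simp: F_def)
    from sorted_wrt_take_below[OF sorted this]
    have "N < length L" and below: "\<forall>y\<in>F. y < i0"
      using i0(2)[OF \<open>i1 \<in> RP\<close>] by (auto simp: F_def)
    have "card F = N"
      unfolding F_def using \<open>N < length L\<close> sorted by (simp add: distinct_card L_def)
    have "F \<subseteq> Fpos \<union> {i. i < i0 \<and> x (rs ! i) = -1}"
      using below signs set_L by (auto simp: Fpos_def F_def dest: in_set_takeD)
    hence "card F \<le> card (Fpos \<union> {i. i < i0 \<and> x (rs ! i) = -1})"
      using fin_F by (intro card_mono) (auto simp: Fpos_def)
    also have "\<dots> \<le> card Fpos + card {i. i < i0 \<and> x (rs ! i) = -1}" by (rule card_Un_le)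
    finally show ?thesis using \<open>card F = N\<close> few_neg by (simp add: N_def)
  qed
  also have "card Fpos = card ((\<lambda>i. rs ! i) ` Fpos)"
    using set_L by (intro card_image[symmetric] inj_on_nth) (auto simp: rs_def Fpos_def F_def dest: in_set_takeD)
  also have "(\<lambda>i. rs ! i) ` Fpos = {j \<in> first_nulls p w H N. x j = 1}"
    by (auto simp: Fpos_def F_def first_nulls_def L_def rs_def)
  finally show ?thesis by (simp add: N_def)
qed

lemma card_signs_many_null_rejections_le_tail:
  assumes "finite H" "k \<ge> 1" "v \<ge> 1"
  shows "real (card {s \<in> H \<rightarrow>\<^sub>E {-1, 1}.
            k \<le> card (knockoff_rejections p w (\<lambda>j. if j \<in> H then s j else c j) v \<inter> H)})
         \<le> knockoff_tail k v * 2 ^ card H"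
proof -
  obtain u where v: "v = Suc u" using assms(3) by (cases v) auto
  define Q where "Q = first_nulls p w H (k + v - 1)"
  have "{s \<in> H \<rightarrow>\<^sub>E {-1, 1}. k \<le> card (knockoff_rejections p w (\<lambda>j. if j \<in> H then s j else c j) v \<inter> H)}
      \<subseteq> {s \<in> H \<rightarrow>\<^sub>E {-1, 1::int}. k \<le> card {j\<in>Q. s j = 1}}"
  proof safe
    fix s assume s: "s \<in> H \<rightarrow>\<^sub>E {-1, 1::int}"
      and many: "k \<le> card (knockoff_rejections p w (\<lambda>j. if j \<in> H then s j else c j) v \<inter> H)"
    have "\<forall>j\<in>H. (if j \<in> H then s j else c j) \<in> {-1, 1}" using s by auto
    from many_null_rejections_imp_many_positive_first_nulls[OF this assms(2,3) many]
    have "k \<le> card {j \<in> Q. (if j \<in> H then s j else c j) = 1}" by (simp only: Q_def)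
    also have "{j \<in> Q. (if j \<in> H then s j else c j) = 1} = {j\<in>Q. s j = 1}"
      using first_nulls_subset[of p w H "k + v - 1"] by (auto simp: Q_def)
    finally show "k \<le> card {j\<in>Q. s j = 1}" .
  qed
  hence "card {s \<in> H \<rightarrow>\<^sub>E {-1, 1}. k \<le> card (knockoff_rejections p w (\<lambda>j. if j \<in> H then s j else c j) v \<inter> H)}
      \<le> card {s \<in> H \<rightarrow>\<^sub>E {-1, 1::int}. k \<le> card {j\<in>Q. s j = 1}}"
    by (rule card_mono[rotated]) (simp add: assms(1) finite_PiE)
  also have "real \<dots> \<le> knockoff_tail k v * 2 ^ card H"
    unfolding v using card_first_nulls_le first_nulls_subset v
    by (intro card_signs_many_positive_le_tail[OF assms(1)]) (auto simp: Q_def)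
  finally show ?thesis by simp
qed

lemma knockoff_tail_nonneg:
  assumes "k \<ge> 1" "v \<ge> 1"
  shows "0 \<le> knockoff_tail k v"
  using card_signs_many_null_rejections_le_tail[OF finite.emptyI assms, of 0 "\<lambda>_. 0" "\<lambda>_. 0"] by simp

section \<open>Conditioning on cells\<close>

lemma sets_le_pattern_eq:
  fixes R :: "('i \<times> 'i) set"
  assumes "finite I"
  shows "{w \<in> space (PiM I (\<lambda>_. borel :: real measure)). le_pattern I w = R} \<in> sets (PiM I (\<lambda>_. borel))"
proof (cases "R \<subseteq> I \<times> I")
  case True
  have "le_pattern I w = R \<longleftrightarrow> (\<forall>ij\<in>I \<times> I. (w (snd ij) \<le> w (fst ij)) = (ij \<in> R))" for w :: "'i \<Rightarrow> real"
    using True by (auto simp: le_pattern_def)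
  moreover have "Measurable.pred (PiM I (\<lambda>_. borel)) (\<lambda>w :: 'i \<Rightarrow> real. \<forall>ij\<in>I \<times> I. (w (snd ij) \<le> w (fst ij)) = (ij \<in> R))"
  proof (intro pred_intros_finite)
    show "finite (I \<times> I)" using assms by simp
    fix ij assume "ij \<in> I \<times> I"
    then have "(\<lambda>w. w (snd ij)) \<in> borel_measurable (PiM I (\<lambda>_. borel :: real measure))"
      "(\<lambda>w. w (fst ij)) \<in> borel_measurable (PiM I (\<lambda>_. borel :: real measure))"
      by (auto intro: measurable_component_singleton)
    then have "Measurable.pred (PiM I (\<lambda>_. borel)) (\<lambda>w :: 'i \<Rightarrow> real. w (snd ij) \<le> w (fst ij))"
      unfolding pred_def by (rule borel_measurable_le)
    then show "Measurable.pred (PiM I (\<lambda>_. borel)) (\<lambda>w :: 'i \<Rightarrow> real. (w (snd ij) \<le> w (fst ij)) = (ij \<in> R))"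
      by (intro pred_intros_logic(6)) (simp_all add: pred_def)
  qed
  ultimately show ?thesis by simp
next
  case False
  then have "{w \<in> space (PiM I (\<lambda>_. borel :: real measure)). le_pattern I w = R} = {}"
    by (auto simp: le_pattern_def)
  then show ?thesis by (metis sets.empty_sets)
qed

lemma (in finite_measure) measure_Diff_UN_uniform_parts:
  assumes "A \<in> sets M" "finite S" "S \<noteq> {}" "G \<subseteq> S" "disjoint_family_on B S"
    and parts: "\<And>s. s \<in> S \<Longrightarrow> B s \<in> sets M \<and> B s \<subseteq> A \<and> measure M (B s) = measure M A / card S"
  shows "measure M (A - (\<Union>s\<in>S - G. B s)) = card G / card S * measure M A"
proof -
  have "measure M (\<Union>s\<in>S - G. B s) = (\<Sum>s\<in>S - G. measure M (B s))"
    using assms(2,5) parts by (intro finite_measure_finite_Union) (auto intro: disjoint_family_on_mono)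
  also have "\<dots> = card (S - G) * (measure M A / card S)" using parts by simp
  also have "real (card (S - G)) = real (card S) - real (card G)"
    using assms(2,4) card_mono[OF assms(2,4)] by (simp add: card_Diff_subset finite_subset of_nat_diff)
  finally have "measure M (\<Union>s\<in>S - G. B s) = (real (card S) - card G) * measure M A / card S"
    by simp
  moreover have "measure M (A - (\<Union>s\<in>S - G. B s)) = measure M A - measure M (\<Union>s\<in>S - G. B s)"
    using assms(1,2) parts by (intro finite_measure_Diff) auto
  moreover have "real (card S) > 0" using assms(2,3) by (simp add: card_gt_0_iff)
  ultimately show ?thesis by (simp add: diff_divide_distrib left_diff_distrib)
qed

text \<open>Conditioning on each cell A i, the parts B i s are equally likely and E only meets the
  parts labelled by G i, which make up a fraction of at most \<beta>.\<close>
lemma (in prob_space) measure_le_by_uniform_cells: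
  fixes \<beta> :: real
  assumes "finite I" "disjoint_family_on A I" "\<And>i. i \<in> I \<Longrightarrow> A i \<in> sets M"
    and "finite S" "S \<noteq> {}" "\<And>i. i \<in> I \<Longrightarrow> disjoint_family_on (B i) S"
    and "\<And>i s. i \<in> I \<Longrightarrow> s \<in> S \<Longrightarrow>
          B i s \<in> sets M \<and> B i s \<subseteq> A i \<and> measure M (B i s) = measure M (A i) / card S"
    and "\<beta> \<ge> 0" "\<And>i. i \<in> I \<Longrightarrow> G i \<subseteq> S \<and> card (G i) \<le> \<beta> * card S"
    and "E \<subseteq> (\<Union>i\<in>I. A i - (\<Union>s\<in>S - G i. B i s))"
  shows "measure M E \<le> \<beta>"
proof -
  have cells: "A i - (\<Union>s\<in>S - G i. B i s) \<in> sets M" if "i \<in> I" for i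
    using that assms(3,4,7) by (intro sets.Diff sets.finite_UN) auto
  have "measure M E \<le> measure M (\<Union>i\<in>I. A i - (\<Union>s\<in>S - G i. B i s))"
    using assms(1,10) cells by (intro finite_measure_mono sets.finite_UN) auto
  also have "\<dots> \<le> (\<Sum>i\<in>I. measure M (A i - (\<Union>s\<in>S - G i. B i s)))"
    using assms(1) cells by (intro finite_measure_subadditive_finite) auto
  also have "\<dots> = (\<Sum>i\<in>I. card (G i) / card S * measure M (A i))"
    using assms by (intro sum.cong measure_Diff_UN_uniform_parts) auto
  also have "\<dots> \<le> (\<Sum>i\<in>I. \<beta> * measure M (A i))"
    using assms(4,5,9) by (intro sum_mono mult_right_mono) (auto simp: pos_divide_le_eq card_gt_0_iff)
  also have "\<dots> = \<beta> * measure M (\<Union>i\<in>I. A i)"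
    using assms(1-3) by (simp add: sum_distrib_left[symmetric] finite_measure_finite_Union image_subset_iff)
  also have "\<dots> \<le> \<beta>"
    using \<open>\<beta> \<ge> 0\<close> by (simp add: mult_left_le prob_le_1)
  finally show ?thesis .
qed

lemma le_pattern_restrict [simp]: "le_pattern I (restrict w I) = le_pattern I w"
  by (auto simp: le_pattern_def)

locale knockoff_model = prob_space M for M :: "'a measure" +
  fixes p :: nat and W :: "nat \<Rightarrow> 'a \<Rightarrow> real" and chi :: "nat \<Rightarrow> 'a \<Rightarrow> int" and H0 :: "nat set"
  assumes W_measurable: "j \<in> {1..p} \<Longrightarrow> W j \<in> borel_measurable M"
    and chi_measurable: "j \<in> {1..p} \<Longrightarrow> chi j \<in> measurable M (count_space UNIV)"
    and chi_values: "j \<in> {1..p} \<Longrightarrow> \<omega> \<in> space M \<Longrightarrow> chi j \<omega> \<in> {-1, 0, 1}"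
    and H0_subset: "H0 \<subseteq> {1..p}"
    and null_signs_uniform: "B \<in> sets (PiM {1..p} (\<lambda>_. borel)) \<Longrightarrow> \<forall>j\<in>H0. s j \<in> {-1, 1} \<Longrightarrow>
      measure M {\<omega> \<in> space M. (\<lambda>j\<in>{1..p}. W j \<omega>) \<in> B
                   \<and> (\<forall>j\<in>{1..p} - H0. chi j \<omega> = c j) \<and> (\<forall>j\<in>H0. chi j \<omega> = s j)}
      = measure M {\<omega> \<in> space M. (\<lambda>j\<in>{1..p}. W j \<omega>) \<in> B
                   \<and> (\<forall>j\<in>{1..p} - H0. chi j \<omega> = c j)} / 2 ^ card H0"
begin

lemma finite_H0: "finite H0"
  using H0_subset finite_subset by blast

definition W_vec :: "'a \<Rightarrow> nat \<Rightarrow> real" where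
  "W_vec \<omega> = (\<lambda>j\<in>{1..p}. W j \<omega>)"

definition cell :: "(nat \<times> nat) set \<Rightarrow> (nat \<Rightarrow> int) \<Rightarrow> 'a set" where
  "cell R c = {\<omega> \<in> space M. le_pattern {1..p} (W_vec \<omega>) = R \<and> (\<forall>j\<in>{1..p} - H0. chi j \<omega> = c j)}"

definition cell_signs :: "(nat \<times> nat) set \<Rightarrow> (nat \<Rightarrow> int) \<Rightarrow> (nat \<Rightarrow> int) \<Rightarrow> 'a set" where
  "cell_signs R c s = {\<omega> \<in> cell R c. \<forall>j\<in>H0. chi j \<omega> = s j}"

lemma sets_chi_eq: "j \<in> {1..p} \<Longrightarrow> {\<omega> \<in> space M. chi j \<omega> = a} \<in> sets M"
  using measurable_sets[OF chi_measurable, of j "{a}"] by (simp add: vimage_def Int_def conj_commute)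

lemma sets_cell: "cell R c \<in> sets M"
proof -
  have "W_vec \<in> measurable M (PiM {1..p} (\<lambda>_. borel))"
    unfolding W_vec_def by (rule measurable_restrict) (simp add: W_measurable)
  from measurable_sets[OF this sets_le_pattern_eq[of "{1..p}" R]]
  have "{\<omega> \<in> space M. le_pattern {1..p} (W_vec \<omega>) = R} \<in> sets M"
    by (simp add: vimage_def Int_def conj_commute W_vec_def space_PiM)
  moreover have "{\<omega> \<in> space M. \<forall>j\<in>{1..p} - H0. chi j \<omega> = c j} \<in> sets M"
    by (rule sets.sets_Collect_finite_All) (auto intro: sets_chi_eq)
  ultimately have "{\<omega> \<in> space M. le_pattern {1..p} (W_vec \<omega>) = R} \<inter>
      {\<omega> \<in> space M. \<forall>j\<in>{1..p} - H0. chi j \<omega> = c j} \<in> sets M" by blast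
  then show ?thesis by (simp add: cell_def Int_def conj_ac)
qed

lemma cell_signs_subset: "cell_signs R c s \<subseteq> cell R c"
  by (auto simp: cell_signs_def)

lemma sets_cell_signs: "cell_signs R c s \<in> sets M"
proof -
  have "{\<omega> \<in> space M. \<forall>j\<in>H0. chi j \<omega> = s j} \<in> sets M"
    using finite_H0 H0_subset by (intro sets.sets_Collect_finite_All sets_chi_eq) auto
  moreover have "cell_signs R c s = cell R c \<inter> {\<omega> \<in> space M. \<forall>j\<in>H0. chi j \<omega> = s j}"
    by (auto simp: cell_signs_def cell_def)
  ultimately show ?thesis using sets_cell by simp
qed

lemma measure_cell_signs:
  assumes "s \<in> H0 \<rightarrow>\<^sub>E {-1, 1}"
  shows "measure M (cell_signs R c s) = measure M (cell R c) / 2 ^ card H0"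
proof -
  have "W_vec \<omega> \<in> {w \<in> space (PiM {1..p} (\<lambda>_. borel)). le_pattern {1..p} w = R}
      \<longleftrightarrow> le_pattern {1..p} (W_vec \<omega>) = R" for \<omega>
    by (simp add: W_vec_def space_PiM)
  then show ?thesis
    using null_signs_uniform[OF sets_le_pattern_eq[of "{1..p}" R], of s c] assms
    by (auto simp: cell_signs_def cell_def W_vec_def conj_ac)
qed

lemma cell_unique:
  assumes "\<omega> \<in> cell R c" "\<omega> \<in> cell R' c'" "c \<in> extensional ({1..p} - H0)" "c' \<in> extensional ({1..p} - H0)"
  shows "R = R'" "c = c'"
  using assms by (auto simp: cell_def intro: extensionalityI)

lemma disjoint_cells:
  "disjoint_family_on (\<lambda>(R, c). cell R c) (UNIV \<times> ({1..p} - H0 \<rightarrow>\<^sub>E {-1, 0, 1}))"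
  unfolding disjoint_family_on_def using cell_unique by (fastforce simp: PiE_def)

lemma disjoint_cell_signs: "disjoint_family_on (cell_signs R c) (H0 \<rightarrow>\<^sub>E {-1, 1})"
  unfolding disjoint_family_on_def
proof (intro ballI impI)
  fix s s' :: "nat \<Rightarrow> int" assume "s \<in> H0 \<rightarrow>\<^sub>E {-1, 1}" "s' \<in> H0 \<rightarrow>\<^sub>E {-1, 1}" "s \<noteq> s'"
  then obtain j where "j \<in> H0" "s j \<noteq> s' j" using PiE_ext by metis
  then show "cell_signs R c s \<inter> cell_signs R c s' = {}" by (auto simp: cell_signs_def)
qed

lemma knockoff_order_cell:
  assumes "\<omega> \<in> cell R c" "\<omega>' \<in> cell R c"
  shows "knockoff_order p (\<lambda>j. W j \<omega>) = knockoff_order p (\<lambda>j. W j \<omega>')"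
  using assms by (intro knockoff_order_cong_le_pattern) (simp add: cell_def W_vec_def)

definition large_signs :: "nat \<Rightarrow> nat \<Rightarrow> (nat \<times> nat) set \<Rightarrow> (nat \<Rightarrow> int) \<Rightarrow> (nat \<Rightarrow> int) set" where
  "large_signs k v R c = {s \<in> H0 \<rightarrow>\<^sub>E {-1, 1}. \<exists>\<omega>\<in>cell R c.
     k \<le> card (knockoff_rejections p (\<lambda>j. W j \<omega>) (\<lambda>j. if j \<in> H0 then s j else c j) v \<inter> H0)}"

text \<open>On a cell the ordering is fixed, so the count is the deterministic one.\<close>
lemma card_large_signs_le_tail:
  assumes "k \<ge> 1" "v \<ge> 1"
  shows "real (card (large_signs k v R c)) \<le> knockoff_tail k v * 2 ^ card H0"
proof (cases "cell R c = {}")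
  case True
  then show ?thesis using knockoff_tail_nonneg[OF assms] by (simp add: large_signs_def)
next
  case False
  then obtain \<omega>0 where \<omega>0: "\<omega>0 \<in> cell R c" by blast
  have same: "knockoff_rejections p (\<lambda>j. W j \<omega>) x v = knockoff_rejections p (\<lambda>j. W j \<omega>0) x v"
    if "\<omega> \<in> cell R c" for \<omega> x
    using knockoff_rejections_cong[OF knockoff_order_cell[OF that \<omega>0] _ assms(2)] by simp
  have "large_signs k v R c = {s \<in> H0 \<rightarrow>\<^sub>E {-1, 1}.
           k \<le> card (knockoff_rejections p (\<lambda>j. W j \<omega>0) (\<lambda>j. if j \<in> H0 then s j else c j) v \<inter> H0)}"
    unfolding large_signs_def using \<omega>0 same by (intro Collect_cong conj_cong refl) metis
  then show ?thesis using card_signs_many_null_rejections_le_tail[OF finite_H0 assms] by simp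
qed

lemma many_null_rejections_in_own_cell:
  assumes "v \<ge> 1" "\<omega> \<in> space M"
    and many: "k \<le> card (knockoff_rejections p (\<lambda>j. W j \<omega>) (\<lambda>j. chi j \<omega>) v \<inter> H0)"
  defines "R \<equiv> le_pattern {1..p} (W_vec \<omega>)" and "c \<equiv> restrict (\<lambda>j. chi j \<omega>) ({1..p} - H0)"
  shows "\<omega> \<in> cell R c - (\<Union>s\<in>(H0 \<rightarrow>\<^sub>E {-1, 1}) - large_signs k v R c. cell_signs R c s)"
proof -
  have cell: "\<omega> \<in> cell R c" using assms(2) by (simp add: cell_def R_def c_def)
  have "s \<in> large_signs k v R c" if "s \<in> H0 \<rightarrow>\<^sub>E {-1, 1}" "\<omega> \<in> cell_signs R c s" for s
  proof -
    have "\<forall>j\<in>{1..p}. chi j \<omega> = (if j \<in> H0 then s j else c j)"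
      using that(2) by (auto simp: cell_signs_def c_def)
    then have "knockoff_rejections p (\<lambda>j. W j \<omega>) (\<lambda>j. chi j \<omega>) v
        = knockoff_rejections p (\<lambda>j. W j \<omega>) (\<lambda>j. if j \<in> H0 then s j else c j) v"
      using assms(1) by (intro knockoff_rejections_cong) auto
    then show ?thesis using that(1) cell many by (auto simp: large_signs_def)
  qed
  with cell show ?thesis by blast
qed

lemma prob_many_null_rejections_le_tail:
  assumes "k \<ge> 1" "v \<ge> 1"
  shows "measure M {\<omega> \<in> space M. k \<le> card (knockoff_rejections p (\<lambda>j. W j \<omega>) (\<lambda>j. chi j \<omega>) v \<inter> H0)}
         \<le> knockoff_tail k v"
proof -
  define S where "S = H0 \<rightarrow>\<^sub>E {-1, 1::int}"
  define I where "I = Pow ({1..p} \<times> {1..p}) \<times> ({1..p} - H0 \<rightarrow>\<^sub>E {-1, 0, 1::int})"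
  define A where "A = (\<lambda>(R, c). cell R c)"
  define B where "B = (\<lambda>(R, c). cell_signs R c)"
  define G where "G = (\<lambda>(R, c). large_signs k v R c)"
  have card_S: "card (H0 \<rightarrow>\<^sub>E {-1, 1::int}) = 2 ^ card H0"
    using finite_H0 by (simp add: card_PiE numeral_2_eq_2)
  have "{\<omega> \<in> space M. k \<le> card (knockoff_rejections p (\<lambda>j. W j \<omega>) (\<lambda>j. chi j \<omega>) v \<inter> H0)}
      \<subseteq> (\<Union>i\<in>I. A i - (\<Union>s\<in>S - G i. B i s))"
  proof clarify
    fix \<omega> assume \<omega>: "\<omega> \<in> space M"
      and "k \<le> card (knockoff_rejections p (\<lambda>j. W j \<omega>) (\<lambda>j. chi j \<omega>) v \<inter> H0)"
    from many_null_rejections_in_own_cell[OF assms(2) this]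
    have "\<omega> \<in> A i - (\<Union>s\<in>S - G i. B i s)"
      if "i = (le_pattern {1..p} (W_vec \<omega>), restrict (\<lambda>j. chi j \<omega>) ({1..p} - H0))" for i
      using that by (simp add: A_def B_def G_def S_def)
    moreover have "(le_pattern {1..p} (W_vec \<omega>), restrict (\<lambda>j. chi j \<omega>) ({1..p} - H0)) \<in> I"
      using \<omega> chi_values by (auto simp: I_def le_pattern_def)
    ultimately show "\<omega> \<in> (\<Union>i\<in>I. A i - (\<Union>s\<in>S - G i. B i s))" by blast
  qed
  then show ?thesis
  proof (rule measure_le_by_uniform_cells[rotated -1])
    show "finite I" by (simp add: I_def finite_PiE)
    show "disjoint_family_on A I"
      using disjoint_cells unfolding A_def by (rule disjoint_family_on_mono[rotated]) (auto simp: I_def)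
    show "finite S" "S \<noteq> {}" using finite_H0 by (auto simp: S_def finite_PiE PiE_eq_empty_iff)
    show "0 \<le> knockoff_tail k v" using assms by (rule knockoff_tail_nonneg)
    show "A i \<in> sets M" for i by (cases i) (simp add: A_def sets_cell)
    show "disjoint_family_on (B i) S" for i by (cases i) (simp add: B_def S_def disjoint_cell_signs)
    show "B i s \<in> sets M \<and> B i s \<subseteq> A i \<and> measure M (B i s) = measure M (A i) / card S"
      if "s \<in> S" for i s
      using that measure_cell_signs
      by (cases i) (simp add: A_def B_def S_def card_S sets_cell_signs cell_signs_subset)
    show "G i \<subseteq> S \<and> real (card (G i)) \<le> knockoff_tail k v * card S" for i
      using card_large_signs_le_tail[OF assms]
      by (cases i) (simp add: card_S G_def S_def large_signs_def)
  qed
qed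

end

theorem theorem1:
  fixes M :: "'a measure"
    and p k v :: nat and \<alpha> :: real
    and W :: "nat \<Rightarrow> 'a \<Rightarrow> real" and chi :: "nat \<Rightarrow> 'a \<Rightarrow> int"
    and H0 :: "nat set"
  assumes "prob_space M"
    and "p \<ge> 1" and "k \<ge> 1" and "0 < \<alpha>" and "\<alpha> < 1"
    and "v > 0" and "knockoff_tail k v \<le> \<alpha>"
    and "\<forall>u. u > 0 \<and> knockoff_tail k u \<le> \<alpha> \<longrightarrow> u \<le> v"
    and "\<forall>j\<in>{1..p}. W j \<in> borel_measurable M"
    and "\<forall>j\<in>{1..p}. chi j \<in> measurable M (count_space UNIV)"
    and "\<forall>j\<in>{1..p}. \<forall>\<omega>\<in>space M. chi j \<omega> \<in> {-1, 0, 1}"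
    and "AE \<omega> in M. inj_on (\<lambda>j. W j \<omega>) {1..p}"
    and "H0 \<subseteq> {1..p}"
    and "\<forall>B \<in> sets (PiM {1..p} (\<lambda>_. borel)). \<forall>c :: nat \<Rightarrow> int. \<forall>s :: nat \<Rightarrow> int.
           (\<forall>j\<in>H0. s j \<in> {-1, 1}) \<longrightarrow>
           measure M {\<omega> \<in> space M. (\<lambda>j\<in>{1..p}. W j \<omega>) \<in> B
                        \<and> (\<forall>j\<in>{1..p} - H0. chi j \<omega> = c j) \<and> (\<forall>j\<in>H0. chi j \<omega> = s j)}
         = measure M {\<omega> \<in> space M. (\<lambda>j\<in>{1..p}. W j \<omega>) \<in> B
                        \<and> (\<forall>j\<in>{1..p} - H0. chi j \<omega> = c j)} / 2 ^ card H0"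
  shows "measure M {\<omega> \<in> space M.
           card (knockoff_rejections p (\<lambda>j. W j \<omega>) (\<lambda>j. chi j \<omega>) v \<inter> H0) \<ge> k} \<le> \<alpha>"
proof -
  interpret knockoff_model M p W chi H0
  proof (rule knockoff_model.intro[OF assms(1)], unfold_locales)
    show "H0 \<subseteq> {1..p}" by (rule assms(13))
  qed (use assms(9-11) assms(14)[rule_format] in simp_all)
  have "measure M {\<omega> \<in> space M.
      card (knockoff_rejections p (\<lambda>j. W j \<omega>) (\<lambda>j. chi j \<omega>) v \<inter> H0) \<ge> k} \<le> knockoff_tail k v"
    using assms(3,6) by (intro prob_many_null_rejections_le_tail) auto
  with assms(7) show ?thesis by linarith
qed

end
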